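(* Let $n\ge1$ and for $k\in\mathbb{N}$ set $D(k)=\sum_{\alpha+\beta=k}(-1)^\beta\dim\mathcal{H}^{\alpha,\beta}(\mathbb{C}^n)$. Then for every $l\in\mathbb{N}$, $$D(2l)=\dim\mathcal{H}^l(\mathbb{R}^{n+1})=\frac{(n-1)_l\,(\frac{n+1}{2})_l}{l!\,(\frac{n-1}{2})_l}.$$
   Context: $\mathcal{H}^{\alpha,\beta}(\mathbb{C}^n)$: polynomials in $Z,\bar Z$ on $\mathbb{C}^n$, homogeneous of degree $\alpha$ in $Z$ and $\beta$ in $\bar Z$, annihilated by $\sum_j\partial^2/\partial z_j\partial\bar z_j$. $\mathcal{H}^l(\mathbb{R}^N)$: harmonic homogeneous polynomials of degree $l$ on $\mathbb{R}^N$. $(a)_l=\Gamma(a+l)/\Gamma(a)$; the right-hand expression is understood as a meromorphic function of $n$ (so for $n=1$ it is interpreted by continuity in $n$). *)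

theory Defs
  imports "HOL-Analysis.Analysis" "HOL-Library.Function_Algebras"
begin

text \<open>Multi-indices are functions nat => nat; a multi-index lives in n variables
if it vanishes outside {..<n}. A polynomial is represented by its coefficient
function (monomial exponent |-> coefficient).\<close>

definition mindex_in :: "nat \<Rightarrow> (nat \<Rightarrow> nat) \<Rightarrow> bool" where
  "mindex_in n a \<longleftrightarrow> (\<forall>i\<ge>n. a i = 0)"

definition mdeg :: "nat \<Rightarrow> (nat \<Rightarrow> nat) \<Rightarrow> nat" where
  "mdeg n a = (\<Sum>i<n. a i)"

definition rderiv :: "nat \<Rightarrow> ((nat \<Rightarrow> nat) \<Rightarrow> real) \<Rightarrow> ((nat \<Rightarrow> nat) \<Rightarrow> real)" where
  "rderiv i p = (\<lambda>m. real (m i + 1) * p (m(i := m i + 1)))"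

definition rLaplacian :: "nat \<Rightarrow> ((nat \<Rightarrow> nat) \<Rightarrow> real) \<Rightarrow> ((nat \<Rightarrow> nat) \<Rightarrow> real)" where
  "rLaplacian N p = (\<lambda>m. \<Sum>j<N. rderiv j (rderiv j p) m)"

definition harmR :: "nat \<Rightarrow> nat \<Rightarrow> ((nat \<Rightarrow> nat) \<Rightarrow> real) set" where
  "harmR N l = {p. (\<forall>m. p m \<noteq> 0 \<longrightarrow> mindex_in N m \<and> mdeg N m = l)
                   \<and> rLaplacian N p = 0}"

text \<open>Polynomials in Z, Zbar on C^n with complex coefficients: coefficient functions
on pairs (a, b) of multi-indices, the monomial being Z^a Zbar^b.
Formal derivatives d/dz_j and d/dzbar_j.\<close>

type_synonym cpoly = "(nat \<Rightarrow> nat) \<times> (nat \<Rightarrow> nat) \<Rightarrow> complex"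

definition dz :: "nat \<Rightarrow> cpoly \<Rightarrow> cpoly" where
  "dz j p = (\<lambda>(a, b). of_nat (a j + 1) * p (a(j := a j + 1), b))"

definition dzbar :: "nat \<Rightarrow> cpoly \<Rightarrow> cpoly" where
  "dzbar j p = (\<lambda>(a, b). of_nat (b j + 1) * p (a, b(j := b j + 1)))"

definition cLaplacian :: "nat \<Rightarrow> cpoly \<Rightarrow> cpoly" where
  "cLaplacian n p = (\<lambda>m. \<Sum>j<n. dz j (dzbar j p) m)"

definition harmC :: "nat \<Rightarrow> nat \<Rightarrow> nat \<Rightarrow> cpoly set" where
  "harmC n \<alpha> \<beta> = {p. (\<forall>a b. p (a, b) \<noteq> 0 \<longrightarrow>
        mindex_in n a \<and> mindex_in n b \<and> mdeg n a = \<alpha> \<and> mdeg n b = \<beta>)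
     \<and> cLaplacian n p = 0}"

definition dimR :: "((nat \<Rightarrow> nat) \<Rightarrow> real) set \<Rightarrow> nat" where
  "dimR S = vector_space.dim (\<lambda>(r::real) f. (\<lambda>x. r * f x)) S"

definition dimC :: "cpoly set \<Rightarrow> nat" where
  "dimC S = vector_space.dim (\<lambda>(r::complex) f. (\<lambda>x. r * f x)) S"

definition Dsum :: "nat \<Rightarrow> nat \<Rightarrow> int" where
  "Dsum n k = (\<Sum>\<beta>\<le>k. (-1) ^ \<beta> * int (dimC (harmC n (k - \<beta>) \<beta>)))"

definition closed_form :: "nat \<Rightarrow> real \<Rightarrow> real" where
  "closed_form l x = pochhammer (x - 1) l * pochhammer ((x + 1) / 2) l
                      / (fact l * pochhammer ((x - 1) / 2) l)"

end

theory Submission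
  imports Defs "HOL-Computational_Algebra.Formal_Power_Series"
begin

text \<open>
  A harmonic polynomial in n+1 variables is determined by its coefficients of low degree in
  the last variable (degree at most 1 in x_n over the reals; exponent 0 in z_n or in zbar_n over
  the complex numbers), because the Laplace equation expresses every other coefficient through
  coefficients of lower degree in the last variable; conversely every choice of these
  coefficients extends. Writing M(n,k) for the number of monomials of degree k in n variables,
  this gives dim H^l(R^{n+1}) = M(n,l) + M(n,l-1) and
  dim H^{alpha,beta}(C^n) = M(n-1,alpha) M(n,beta) + M(n,alpha) M(n-1,beta) - M(n-1,alpha) M(n-1,beta).
  Since the sum of M(n,k) X^k is (1-X)^{-n}, the generating function of the alternating sums D(k)
  is (1+X^2)/(1-X^2)^n, whose coefficient at X^{2l} is again M(n,l) + M(n,l-1).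
  Finally M(n,k) = (n)_k / k!, so this dimension is a polynomial in n, and it agrees with the
  closed form wherever ((n-1)/2)_l does not vanish, in particular near every n >= 1 except at n = 1
  itself.
\<close>

section \<open>Dimension of a function space with interpolation points\<close>

lemma sum_fun_apply: "sum f A x = (\<Sum>a\<in>A. f a x)"
  by (induction A rule: infinite_finite_induct) auto

lemma dim_eq_card_of_interpolation_points:
  fixes V :: "('x \<Rightarrow> 'a::field) set" and M :: "'x set" and b :: "'x \<Rightarrow> 'x \<Rightarrow> 'a"
  assumes "finite M"
    and basis_in: "\<And>m. m \<in> M \<Longrightarrow> b m \<in> V"
    and basis_delta: "\<And>m m'. m \<in> M \<Longrightarrow> m' \<in> M \<Longrightarrow> b m m' = (if m' = m then 1 else 0)"
    and zero: "0 \<in> V"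
    and add: "\<And>p q. p \<in> V \<Longrightarrow> q \<in> V \<Longrightarrow> p + q \<in> V"
    and scale: "\<And>c p. p \<in> V \<Longrightarrow> (\<lambda>x. c * p x) \<in> V"
    and vanishing: "\<And>p. p \<in> V \<Longrightarrow> \<forall>m\<in>M. p m = 0 \<Longrightarrow> p = 0"
  shows "vector_space.dim (\<lambda>(r::'a) f. (\<lambda>x. r * f x)) V = card M"
proof -
  interpret v: vector_space "\<lambda>(r::'a) (f::'x \<Rightarrow> 'a). (\<lambda>x. r * f x)"
    by unfold_locales (auto simp: fun_eq_iff algebra_simps)
  have expand: "(\<Sum>m\<in>M. c m * b m m') = c m'" if "m' \<in> M" for c m'
  proof -
    have "(\<Sum>m\<in>M. c m * b m m') = (\<Sum>m\<in>M. if m = m' then c m' else 0)"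
      by (rule sum.cong) (auto simp: basis_delta that)
    also have "\<dots> = c m'" using \<open>finite M\<close> that by simp
    finally show ?thesis .
  qed
  have inj: "inj_on b M"
  proof (rule inj_onI)
    fix m m' assume "m \<in> M" "m' \<in> M" "b m = b m'"
    then have "b m m = b m' m" by simp
    with \<open>m \<in> M\<close> \<open>m' \<in> M\<close> show "m = m'" by (simp add: basis_delta split: if_splits)
  qed
  have "v.independent (b ` M)"
  proof (rule v.independent_if_scalars_zero)
    show "finite (b ` M)" using \<open>finite M\<close> by simp
    fix c :: "('x \<Rightarrow> 'a) \<Rightarrow> 'a" and f
    assume comb: "(\<Sum>f\<in>b ` M. (\<lambda>y. c f * f y)) = 0" and "f \<in> b ` M"
    then obtain m where m: "m \<in> M" "f = b m" by auto
    have "0 = (\<Sum>f\<in>b ` M. c f * f m)" using fun_cong[OF comb, of m] by (simp add: sum_fun_apply)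
    also have "\<dots> = (\<Sum>m'\<in>M. c (b m') * b m' m)" by (simp add: sum.reindex[OF inj])
    also have "\<dots> = c f" using expand[OF m(1), of "c \<circ> b"] m by simp
    finally show "c f = 0" ..
  qed
  moreover have "V \<subseteq> v.span (b ` M)"
  proof
    fix p assume p: "p \<in> V"
    define s where "s = (\<Sum>m\<in>M. (\<lambda>y. p m * b m y))"
    have "s \<in> V"
      unfolding s_def using zero add scale basis_in
      by (intro v.subspace_sum) (auto simp: v.subspace_def)
    moreover have "s m = p m" if "m \<in> M" for m
      using expand[OF that, of p] by (simp add: s_def sum_fun_apply)
    ultimately have "p + (\<lambda>x. (-1) * s x) = 0"
      using p by (intro vanishing add scale) auto
    then have "p = s" by (auto simp: fun_eq_iff)
    moreover have "s \<in> v.span (b ` M)"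
      unfolding s_def by (intro v.span_sum v.span_scale v.span_base) auto
    ultimately show "p \<in> v.span (b ` M)" by simp
  qed
  ultimately show ?thesis
    using v.dim_unique[of "b ` M" V "card M"] basis_in card_image[OF inj] by auto
qed

section \<open>Monomials\<close>

definition monomials :: "nat \<Rightarrow> nat \<Rightarrow> (nat \<Rightarrow> nat) set" where
  "monomials N l = {m. mindex_in N m \<and> mdeg N m = l}"

lemma mdeg_Suc: "mdeg (Suc n) m = mdeg n m + m n"
  by (simp add: mdeg_def)

lemma mdeg_fun_upd: "j < N \<Longrightarrow> mdeg N (m(j := v)) + m j = mdeg N m + v"
  unfolding mdeg_def by (simp add: sum.remove[of "{..<N}" j])

lemma mdeg_fun_upd_outside: "mdeg n (m(n := v)) = mdeg n m"
  unfolding mdeg_def by (rule sum.cong) auto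

lemma fun_upd_add_in_monomials:
  assumes "j < N"
  shows "m(j := m j + d) \<in> monomials N l \<longleftrightarrow> d \<le> l \<and> m \<in> monomials N (l - d)"
proof -
  have "mindex_in N (m(j := m j + d)) \<longleftrightarrow> mindex_in N m"
    using assms by (auto simp: mindex_in_def)
  moreover have "mdeg N (m(j := m j + d)) = mdeg N m + d"
    using mdeg_fun_upd[OF assms, of m "m j + d"] by simp
  ultimately show ?thesis by (auto simp: monomials_def)
qed

lemma monomials_0: "monomials 0 l = (if l = 0 then {\<lambda>_. 0} else {})"
  by (auto simp: monomials_def mindex_in_def mdeg_def fun_eq_iff)

lemma monomials_Suc_slice:
  assumes "v \<le> l"
  shows "{m \<in> monomials (Suc n) l. m n = v} = (\<lambda>a. a(n := v)) ` monomials n (l - v)"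
proof (intro equalityI subsetI)
  fix m assume m: "m \<in> {m \<in> monomials (Suc n) l. m n = v}"
  then have "m(n := 0) \<in> monomials n (l - v)"
    by (auto simp: monomials_def mindex_in_def mdeg_Suc mdeg_fun_upd_outside)
  moreover have "m = (m(n := 0))(n := v)" using m by auto
  ultimately show "m \<in> (\<lambda>a. a(n := v)) ` monomials n (l - v)" by blast
next
  fix m assume "m \<in> (\<lambda>a. a(n := v)) ` monomials n (l - v)"
  with assms show "m \<in> {m \<in> monomials (Suc n) l. m n = v}"
    by (auto simp: monomials_def mindex_in_def mdeg_Suc mdeg_fun_upd_outside)
qed

lemma inj_on_fun_upd_monomials: "inj_on (\<lambda>a. a(n := v)) (monomials n k)"
proof (rule inj_onI)
  fix a b assume "a \<in> monomials n k" "b \<in> monomials n k" "a(n := v) = b(n := v)"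
  then have "a i = b i" for i
    by (cases "i = n") (auto simp: monomials_def mindex_in_def dest: fun_cong[of _ _ i])
  then show "a = b" by auto
qed

lemma monomials_Suc_eq_UN: "monomials (Suc n) l = (\<Union>v\<le>l. {m \<in> monomials (Suc n) l. m n = v})"
  by (auto simp: monomials_def mdeg_Suc)

lemma finite_monomials: "finite (monomials n l)"
proof (induction n arbitrary: l)
  case (Suc n)
  then show ?case
    by (subst monomials_Suc_eq_UN) (simp add: monomials_Suc_slice)
qed (simp add: monomials_0)

lemma card_monomials_slice:
  "v \<le> l \<Longrightarrow> card {m \<in> monomials (Suc n) l. m n = v} = card (monomials n (l - v))"
  by (simp add: monomials_Suc_slice card_image[OF inj_on_fun_upd_monomials])

fun multichoose :: "nat \<Rightarrow> nat \<Rightarrow> nat" where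
  "multichoose 0 k = (if k = 0 then 1 else 0)"
| "multichoose (Suc n) k = (\<Sum>j\<le>k. multichoose n j)"

lemma sum_atMost_diff: "(\<Sum>v\<le>k. f (k - v)) = (\<Sum>j\<le>(k::nat). f j)"
  by (rule sum.reindex_bij_witness[where i="\<lambda>i. k - i" and j="\<lambda>i. k - i"]) auto

lemma card_monomials: "card (monomials n k) = multichoose n k"
proof (induction n arbitrary: k)
  case 0
  then show ?case by (simp add: monomials_0)
next
  case (Suc n)
  have "card (monomials (Suc n) k) = (\<Sum>v\<le>k. card {m \<in> monomials (Suc n) k. m n = v})"
    by (subst monomials_Suc_eq_UN, rule card_UN_disjoint)
       (auto intro: finite_subset[OF _ finite_monomials])
  also have "\<dots> = (\<Sum>v\<le>k. multichoose n (k - v))"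
    by (simp add: card_monomials_slice Suc)
  also have "\<dots> = multichoose (Suc n) k"
    by (simp add: sum_atMost_diff)
  finally show ?case .
qed

section \<open>Harmonic polynomials on R^{n+1}\<close>

lemma rderiv_rderiv: "rderiv j (rderiv j p) m = real ((m j + 1) * (m j + 2)) * p (m(j := m j + 2))"
  by (simp add: rderiv_def algebra_simps)

lemma rLaplacian_Suc:
  "rLaplacian (Suc n) p m =
     (\<Sum>j<n. real ((m j + 1) * (m j + 2)) * p (m(j := m j + 2)))
     + real ((m n + 1) * (m n + 2)) * p (m(n := m n + 2))"
  by (simp add: rLaplacian_def rderiv_rderiv)

lemma rLaplacian_add: "rLaplacian N (p + q) = rLaplacian N p + rLaplacian N q"
  by (simp add: rLaplacian_def rderiv_rderiv fun_eq_iff sum.distrib algebra_simps)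

lemma rLaplacian_scale: "rLaplacian N (\<lambda>x. c * p x) = (\<lambda>x. c * rLaplacian N p x)"
  by (simp add: rLaplacian_def rderiv_rderiv fun_eq_iff sum_distrib_left algebra_simps)

text \<open>The harmonic polynomial in n+1 variables whose coefficients of x_n-degree at most 1
  are those of q: the Laplace equation at m determines the coefficient at m(n := m n + 2).\<close>
function harm_extR :: "nat \<Rightarrow> nat \<Rightarrow> ((nat \<Rightarrow> nat) \<Rightarrow> real) \<Rightarrow> (nat \<Rightarrow> nat) \<Rightarrow> real" where
  "harm_extR n l q m =
    (if m \<notin> monomials (Suc n) l then 0
     else if m n \<le> 1 then q m
     else - (\<Sum>j<n. real ((m j + 1) * (m j + 2)) * harm_extR n l q ((m(n := m n - 2))(j := m j + 2)))
          / real ((m n - 1) * m n))"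
  by pat_completeness auto
termination by (relation "Wellfounded.measure (\<lambda>(n, l, q, m). m n)") auto

declare harm_extR.simps [simp del]

lemma harm_extR_eq_0: "m \<notin> monomials (Suc n) l \<Longrightarrow> harm_extR n l q m = 0"
  by (simp add: harm_extR.simps)

lemma harm_extR_free: "m \<in> monomials (Suc n) l \<Longrightarrow> m n \<le> 1 \<Longrightarrow> harm_extR n l q m = q m"
  by (simp add: harm_extR.simps)

lemma harm_extR_raise:
  assumes "m(n := m n + 2) \<in> monomials (Suc n) l"
  shows "real ((m n + 1) * (m n + 2)) * harm_extR n l q (m(n := m n + 2))
         = - (\<Sum>j<n. real ((m j + 1) * (m j + 2)) * harm_extR n l q (m(j := m j + 2)))"
proof -
  have "harm_extR n l q (m(n := m n + 2))
        = - (\<Sum>j<n. real ((m j + 1) * (m j + 2)) * harm_extR n l q (m(j := m j + 2)))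
          / real ((m n + 1) * (m n + 2))"
    using assms by (subst harm_extR.simps) (simp add: algebra_simps)
  then show ?thesis by (simp del: of_nat_mult)
qed

lemma rLaplacian_harm_extR: "rLaplacian (Suc n) (harm_extR n l q) = 0"
proof
  fix m
  show "rLaplacian (Suc n) (harm_extR n l q) m = 0 m"
  proof (cases "m(n := m n + 2) \<in> monomials (Suc n) l")
    case True
    then show ?thesis unfolding rLaplacian_Suc harm_extR_raise[OF True] by simp
  next
    case False
    have "harm_extR n l q (m(j := m j + 2)) = 0" if "j < Suc n" for j
      using False fun_upd_add_in_monomials[OF that, of m 2] fun_upd_add_in_monomials[of n "Suc n" m 2]
      by (auto intro: harm_extR_eq_0)
    then show ?thesis by (simp add: rLaplacian_Suc)
  qed
qed

lemma harmR_Suc_eq_0: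
  assumes p: "p \<in> harmR (Suc n) l"
    and free: "\<And>m. m \<in> monomials (Suc n) l \<Longrightarrow> m n \<le> 1 \<Longrightarrow> p m = 0"
  shows "p = 0"
proof -
  have "p m = 0" for m
  proof (induction "m n" arbitrary: m rule: less_induct)
    case less
    consider "m \<notin> monomials (Suc n) l" | "m \<in> monomials (Suc n) l" "m n \<le> 1" | "m n \<ge> 2"
      by linarith
    then show ?case
    proof cases
      case 1
      then show ?thesis using p by (auto simp: harmR_def monomials_def)
    next
      case 2
      then show ?thesis by (rule free)
    next
      case 3
      define m' where "m' = m(n := m n - 2)"
      have "p (m'(j := m' j + 2)) = 0" if "j < n" for j
        using 3 that by (intro less) (auto simp: m'_def)
      moreover have "m'(n := m' n + 2) = m" using 3 by (auto simp: m'_def fun_eq_iff)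
      moreover have "rLaplacian (Suc n) p m' = 0" using p by (simp add: harmR_def)
      ultimately have "real ((m' n + 1) * (m' n + 2)) * p m = 0" by (simp add: rLaplacian_Suc)
      then show ?thesis by (simp del: of_nat_mult)
    qed
  qed
  then show ?thesis by auto
qed

lemma dimR_harmR_Suc: "dimR (harmR (Suc n) l) = card {m \<in> monomials (Suc n) l. m n \<le> 1}"
  unfolding dimR_def
proof (rule dim_eq_card_of_interpolation_points)
  let ?M = "{m \<in> monomials (Suc n) l. m n \<le> 1}"
  let ?b = "\<lambda>m0. harm_extR n l (\<lambda>m. if m = m0 then 1 else 0)"
  show "finite ?M" using finite_monomials by simp
  show "?b m \<in> harmR (Suc n) l" for m
    using harm_extR_eq_0 rLaplacian_harm_extR by (fastforce simp: harmR_def monomials_def)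
  show "?b m m' = (if m' = m then 1 else 0)" if "m \<in> ?M" "m' \<in> ?M" for m m'
    using that by (simp add: harm_extR_free)
  show "0 \<in> harmR (Suc n) l"
    by (simp add: harmR_def rLaplacian_def rderiv_rderiv fun_eq_iff)
  show "p + q \<in> harmR (Suc n) l" if "p \<in> harmR (Suc n) l" "q \<in> harmR (Suc n) l" for p q
    using that unfolding harmR_def by (auto simp: rLaplacian_add) (metis add.right_neutral)+
  show "(\<lambda>x. c * p x) \<in> harmR (Suc n) l" if "p \<in> harmR (Suc n) l" for c p
    using that by (auto simp: harmR_def rLaplacian_scale)
  show "p = 0" if "p \<in> harmR (Suc n) l" "\<forall>m\<in>?M. p m = 0" for p
    using harmR_Suc_eq_0[OF that(1)] that(2) by blast
qed

lemma card_monomials_low_last_degree: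
  "card {m \<in> monomials (Suc n) l. m n \<le> 1}
     = multichoose n l + (if l \<ge> 1 then multichoose n (l - 1) else 0)"
proof -
  have "{m \<in> monomials (Suc n) l. m n \<le> 1} = (\<Union>v\<le>min 1 l. {m \<in> monomials (Suc n) l. m n = v})"
    by (auto simp: monomials_def mdeg_Suc)
  also have "card \<dots> = (\<Sum>v\<le>min 1 l. multichoose n (l - v))"
    by (subst card_UN_disjoint)
       (auto intro: finite_subset[OF _ finite_monomials] simp: card_monomials_slice card_monomials)
  finally show ?thesis by (cases l) auto
qed

section \<open>Harmonic polynomials on C^{n+1}\<close>

lemma cLaplacian_Suc:
  "cLaplacian (Suc n) p (a, b) =
     (\<Sum>j<n. of_nat ((a j + 1) * (b j + 1)) * p (a(j := a j + 1), b(j := b j + 1)))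
     + of_nat ((a n + 1) * (b n + 1)) * p (a(n := a n + 1), b(n := b n + 1))"
  by (simp add: cLaplacian_def dz_def dzbar_def algebra_simps)

lemma cLaplacian_add: "cLaplacian N (p + q) = cLaplacian N p + cLaplacian N q"
  by (simp add: cLaplacian_def dz_def dzbar_def fun_eq_iff sum.distrib algebra_simps split: prod.splits)

lemma cLaplacian_scale: "cLaplacian N (\<lambda>x. c * p x) = (\<lambda>x. c * cLaplacian N p x)"
  by (simp add: cLaplacian_def dz_def dzbar_def fun_eq_iff sum_distrib_left algebra_simps split: prod.splits)

text \<open>The complex analogue of harm_extR: the free coefficients are those with a n = 0 or
  b n = 0, and the Laplace equation at (a, b) determines the coefficient at
  (a(n := a n + 1), b(n := b n + 1)).\<close>
function harm_extC :: "nat \<Rightarrow> nat \<Rightarrow> nat \<Rightarrow> cpoly \<Rightarrow> cpoly" where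
  "harm_extC n \<alpha> \<beta> q (a, b) =
    (if a \<notin> monomials (Suc n) \<alpha> \<or> b \<notin> monomials (Suc n) \<beta> then 0
     else if a n = 0 \<or> b n = 0 then q (a, b)
     else - (\<Sum>j<n. of_nat ((a j + 1) * (b j + 1))
                     * harm_extC n \<alpha> \<beta> q ((a(n := a n - 1))(j := a j + 1), (b(n := b n - 1))(j := b j + 1)))
          / of_nat (a n * b n))"
  by pat_completeness auto
termination by (relation "Wellfounded.measure (\<lambda>(n, \<alpha>, \<beta>, q, a, b). a n)") auto

declare harm_extC.simps [simp del]

lemma harm_extC_eq_0:
  "a \<notin> monomials (Suc n) \<alpha> \<or> b \<notin> monomials (Suc n) \<beta> \<Longrightarrow> harm_extC n \<alpha> \<beta> q (a, b) = 0"
  by (simp add: harm_extC.simps)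

lemma harm_extC_free:
  "a \<in> monomials (Suc n) \<alpha> \<Longrightarrow> b \<in> monomials (Suc n) \<beta> \<Longrightarrow> a n = 0 \<or> b n = 0
   \<Longrightarrow> harm_extC n \<alpha> \<beta> q (a, b) = q (a, b)"
  by (simp add: harm_extC.simps)

lemma harm_extC_raise:
  assumes "a(n := a n + 1) \<in> monomials (Suc n) \<alpha>" "b(n := b n + 1) \<in> monomials (Suc n) \<beta>"
  shows "of_nat ((a n + 1) * (b n + 1)) * harm_extC n \<alpha> \<beta> q (a(n := a n + 1), b(n := b n + 1))
         = - (\<Sum>j<n. of_nat ((a j + 1) * (b j + 1)) * harm_extC n \<alpha> \<beta> q (a(j := a j + 1), b(j := b j + 1)))"
proof -
  have "(of_nat ((a n + 1) * (b n + 1)) :: complex) \<noteq> 0"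
    by (simp only: of_nat_eq_0_iff) simp
  moreover have "harm_extC n \<alpha> \<beta> q (a(n := a n + 1), b(n := b n + 1))
        = - (\<Sum>j<n. of_nat ((a j + 1) * (b j + 1)) * harm_extC n \<alpha> \<beta> q (a(j := a j + 1), b(j := b j + 1)))
          / of_nat ((a n + 1) * (b n + 1))"
    using assms by (subst harm_extC.simps) simp
  ultimately show ?thesis by (rule trans[OF mult.commute nonzero_eq_divide_eq[THEN iffD1]])
qed

lemma cLaplacian_harm_extC: "cLaplacian (Suc n) (harm_extC n \<alpha> \<beta> q) = 0"
proof
  fix m :: "(nat \<Rightarrow> nat) \<times> (nat \<Rightarrow> nat)"
  obtain a b where m: "m = (a, b)" by fastforce
  show "cLaplacian (Suc n) (harm_extC n \<alpha> \<beta> q) m = 0 m"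
  proof (cases "a(n := a n + 1) \<in> monomials (Suc n) \<alpha> \<and> b(n := b n + 1) \<in> monomials (Suc n) \<beta>")
    case True
    then show ?thesis unfolding m cLaplacian_Suc harm_extC_raise[OF conjunct1[OF True] conjunct2[OF True]]
      by simp
  next
    case False
    have "harm_extC n \<alpha> \<beta> q (a(j := a j + 1), b(j := b j + 1)) = 0" if "j < Suc n" for j
      using False fun_upd_add_in_monomials[OF that, of a 1] fun_upd_add_in_monomials[OF that, of b 1]
        fun_upd_add_in_monomials[of n "Suc n" a 1] fun_upd_add_in_monomials[of n "Suc n" b 1]
      by (auto intro: harm_extC_eq_0)
    then show ?thesis unfolding m cLaplacian_Suc by simp
  qed
qed

lemma harmC_Suc_eq_0:
  assumes p: "p \<in> harmC (Suc n) \<alpha> \<beta>"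
    and free: "\<And>a b. a \<in> monomials (Suc n) \<alpha> \<Longrightarrow> b \<in> monomials (Suc n) \<beta> \<Longrightarrow> a n = 0 \<or> b n = 0
                 \<Longrightarrow> p (a, b) = 0"
  shows "p = 0"
proof -
  have "p (a, b) = 0" for a b
  proof (induction "a n" arbitrary: a b rule: less_induct)
    case less
    consider "a \<notin> monomials (Suc n) \<alpha> \<or> b \<notin> monomials (Suc n) \<beta>"
      | "a \<in> monomials (Suc n) \<alpha>" "b \<in> monomials (Suc n) \<beta>" "a n = 0 \<or> b n = 0"
      | "a n \<ge> 1" "b n \<ge> 1"
      by linarith
    then show ?case
    proof cases
      case 1
      then show ?thesis using p by (auto simp: harmC_def monomials_def)
    next
      case 2
      then show ?thesis by (rule free)
    next
      case 3
      define a' where "a' = a(n := a n - 1)"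
      define b' where "b' = b(n := b n - 1)"
      have "p (a'(j := a' j + 1), b'(j := b' j + 1)) = 0" if "j < n" for j
        using 3 that by (intro less) (auto simp: a'_def)
      moreover have "a'(n := a' n + 1) = a" "b'(n := b' n + 1) = b"
        using 3 by (auto simp: a'_def b'_def fun_eq_iff)
      moreover have "cLaplacian (Suc n) p (a', b') = 0" using p by (simp add: harmC_def)
      ultimately have "of_nat ((a' n + 1) * (b' n + 1)) * p (a, b) = 0"
        by (simp add: cLaplacian_Suc)
      then show ?thesis by (metis add_is_0 mult_eq_0_iff of_nat_eq_0_iff one_neq_zero)
    qed
  qed
  then show ?thesis by (auto simp: fun_eq_iff)
qed

lemma dimC_harmC_Suc:
  "dimC (harmC (Suc n) \<alpha> \<beta>)
     = card {(a, b). a \<in> monomials (Suc n) \<alpha> \<and> b \<in> monomials (Suc n) \<beta> \<and> (a n = 0 \<or> b n = 0)}"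
  unfolding dimC_def
proof (rule dim_eq_card_of_interpolation_points)
  let ?M = "{(a, b). a \<in> monomials (Suc n) \<alpha> \<and> b \<in> monomials (Suc n) \<beta> \<and> (a n = 0 \<or> b n = 0)}"
  let ?b = "\<lambda>m0. harm_extC n \<alpha> \<beta> (\<lambda>m. if m = m0 then 1 else 0)"
  show "finite ?M"
    by (rule finite_subset[of _ "monomials (Suc n) \<alpha> \<times> monomials (Suc n) \<beta>"])
       (auto simp: finite_monomials)
  show "?b m \<in> harmC (Suc n) \<alpha> \<beta>" for m
  proof -
    have "harm_extC n \<alpha> \<beta> q (a, b) = 0" if "\<not> (a \<in> monomials (Suc n) \<alpha> \<and> b \<in> monomials (Suc n) \<beta>)"
      for q a b using that by (simp add: harm_extC_eq_0)
    then show ?thesis using cLaplacian_harm_extC unfolding harmC_def monomials_def by blast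
  qed
  show "?b m m' = (if m' = m then 1 else 0)" if "m \<in> ?M" "m' \<in> ?M" for m m'
    using that by (clarsimp simp: harm_extC_free)
  show "0 \<in> harmC (Suc n) \<alpha> \<beta>"
    by (simp add: harmC_def cLaplacian_def dz_def dzbar_def fun_eq_iff split: prod.splits)
  show "p + q \<in> harmC (Suc n) \<alpha> \<beta>" if "p \<in> harmC (Suc n) \<alpha> \<beta>" "q \<in> harmC (Suc n) \<alpha> \<beta>" for p q
    using that unfolding harmC_def by (auto simp: cLaplacian_add) (metis add.right_neutral)+
  show "(\<lambda>x. c * p x) \<in> harmC (Suc n) \<alpha> \<beta>" if "p \<in> harmC (Suc n) \<alpha> \<beta>" for c p
    using that by (auto simp: harmC_def cLaplacian_scale)
  show "p = 0" if "p \<in> harmC (Suc n) \<alpha> \<beta>" "\<forall>m\<in>?M. p m = 0" for p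
    using harmC_Suc_eq_0[OF that(1)] that(2) by blast
qed

lemma card_bimonomials_low_last_degree:
  "int (card {(a, b). a \<in> monomials (Suc n) \<alpha> \<and> b \<in> monomials (Suc n) \<beta> \<and> (a n = 0 \<or> b n = 0)})
     = int (multichoose n \<alpha> * multichoose (Suc n) \<beta>) + int (multichoose (Suc n) \<alpha> * multichoose n \<beta>)
       - int (multichoose n \<alpha> * multichoose n \<beta>)"
proof -
  define A where "A = monomials (Suc n) \<alpha>"
  define B where "B = monomials (Suc n) \<beta>"
  define A0 where "A0 = {a \<in> A. a n = 0}"
  define B0 where "B0 = {b \<in> B. b n = 0}"
  have fin: "finite (A0 \<times> B)" "finite (A \<times> B0)"
    by (simp_all add: A_def B_def A0_def B0_def finite_monomials)
  have "{(a, b). a \<in> A \<and> b \<in> B \<and> (a n = 0 \<or> b n = 0)} = A0 \<times> B \<union> A \<times> B0"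
    by (auto simp: A0_def B0_def)
  moreover have "A0 \<times> B \<inter> A \<times> B0 = A0 \<times> B0" by (auto simp: A0_def B0_def)
  ultimately have "int (card {(a, b). a \<in> A \<and> b \<in> B \<and> (a n = 0 \<or> b n = 0)})
      = int (card A0 * card B) + int (card A * card B0) - int (card A0 * card B0)"
    using card_Un_Int[OF fin] by (simp only: card_cartesian_product)
  moreover have "card A = multichoose (Suc n) \<alpha>" "card B = multichoose (Suc n) \<beta>"
    by (simp_all only: A_def B_def card_monomials)
  moreover have "card A0 = multichoose n \<alpha>" "card B0 = multichoose n \<beta>"
    using card_monomials_slice[of 0 _ n] by (simp_all add: A0_def B0_def A_def B_def card_monomials)
  ultimately show ?thesis by (simp only: A_def B_def)
qed

section \<open>Generating functions\<close>

definition multichoose_fps :: "nat \<Rightarrow> int fps" where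
  "multichoose_fps m = Abs_fps (\<lambda>k. int (multichoose m k))"

definition alt_multichoose_fps :: "nat \<Rightarrow> int fps" where
  "alt_multichoose_fps m = Abs_fps (\<lambda>k. (-1) ^ k * int (multichoose m k))"

definition even_multichoose_fps :: "nat \<Rightarrow> int fps" where
  "even_multichoose_fps m = Abs_fps (\<lambda>k. if even k then int (multichoose m (k div 2)) else 0)"

lemma multichoose_fps_times_power: "multichoose_fps m * (1 - fps_X) ^ m = 1"
proof (induction m)
  case 0
  show ?case by (rule fps_ext) (simp add: multichoose_fps_def)
next
  case (Suc m)
  have "multichoose_fps (Suc m) * (1 - fps_X) = multichoose_fps m"
  proof (rule fps_ext)
    fix k
    have "multichoose_fps (Suc m) * (1 - fps_X) = multichoose_fps (Suc m) - fps_X * multichoose_fps (Suc m)"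
      by (simp add: algebra_simps)
    then show "fps_nth (multichoose_fps (Suc m) * (1 - fps_X)) k = fps_nth (multichoose_fps m) k"
      by (cases k) (simp_all add: multichoose_fps_def)
  qed
  then show ?case using Suc by (simp add: mult.assoc[symmetric])
qed

lemma alt_multichoose_fps_times_power: "alt_multichoose_fps m * (1 + fps_X) ^ m = 1"
proof (induction m)
  case 0
  show ?case by (rule fps_ext) (simp add: alt_multichoose_fps_def)
next
  case (Suc m)
  have "alt_multichoose_fps (Suc m) * (1 + fps_X) = alt_multichoose_fps m"
  proof (rule fps_ext)
    fix k
    have "alt_multichoose_fps (Suc m) * (1 + fps_X)
          = alt_multichoose_fps (Suc m) + fps_X * alt_multichoose_fps (Suc m)"
      by (simp add: algebra_simps)
    then show "fps_nth (alt_multichoose_fps (Suc m) * (1 + fps_X)) k = fps_nth (alt_multichoose_fps m) k"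
      by (cases k) (simp_all add: alt_multichoose_fps_def algebra_simps)
  qed
  then show ?case using Suc by (simp add: mult.assoc[symmetric])
qed

lemma even_multichoose_fps_times_power: "even_multichoose_fps m * (1 - fps_X\<^sup>2) ^ m = 1"
proof (induction m)
  case 0
  show ?case by (rule fps_ext) (auto simp: even_multichoose_fps_def elim!: evenE)
next
  case (Suc m)
  have "even_multichoose_fps (Suc m) * (1 - fps_X\<^sup>2) = even_multichoose_fps m"
  proof (rule fps_ext)
    fix k
    have e: "even_multichoose_fps (Suc m) * (1 - fps_X\<^sup>2)
          = even_multichoose_fps (Suc m) - fps_X\<^sup>2 * even_multichoose_fps (Suc m)"
      by (simp add: algebra_simps)
    consider "k = 0" | "k = 1" | j where "k = Suc (Suc j)"
      by (metis One_nat_def not0_implies_Suc)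
    then show "fps_nth (even_multichoose_fps (Suc m) * (1 - fps_X\<^sup>2)) k
               = fps_nth (even_multichoose_fps m) k"
      unfolding e by cases (simp_all add: even_multichoose_fps_def fps_X_power_mult_nth)
  qed
  then show ?case using Suc by (simp add: mult.assoc[symmetric])
qed

lemma alternating_fps_identity:
  "alt_multichoose_fps (Suc m) * multichoose_fps m + alt_multichoose_fps m * multichoose_fps (Suc m)
     - alt_multichoose_fps m * multichoose_fps m = even_multichoose_fps (Suc m) * (1 + fps_X\<^sup>2)"
    (is "?lhs = ?rhs")
proof -
  define a :: "int fps" where "a = 1 - fps_X"
  define b :: "int fps" where "b = 1 + fps_X"
  let ?F = multichoose_fps and ?G = alt_multichoose_fps
  have F: "?F m * a ^ m = 1" "?F (Suc m) * a ^ Suc m = 1"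
    and G: "?G m * b ^ m = 1" "?G (Suc m) * b ^ Suc m = 1"
    unfolding a_def b_def by (rule multichoose_fps_times_power alt_multichoose_fps_times_power)+
  have ab: "a * b = 1 - fps_X\<^sup>2"
    by (simp add: a_def b_def algebra_simps power2_eq_square)
  have "?G (Suc m) * ?F m * (a * b) ^ Suc m = (?G (Suc m) * b ^ Suc m) * (?F m * a ^ m) * a"
    and "?G m * ?F (Suc m) * (a * b) ^ Suc m = (?G m * b ^ m) * (?F (Suc m) * a ^ Suc m) * b"
    and "?G m * ?F m * (a * b) ^ Suc m = (?G m * b ^ m) * (?F m * a ^ m) * (a * b)"
    by (simp_all only: power_mult_distrib power_Suc mult_ac)
  then have "?lhs * (a * b) ^ Suc m
        = (?G (Suc m) * b ^ Suc m) * (?F m * a ^ m) * a + (?G m * b ^ m) * (?F (Suc m) * a ^ Suc m) * b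
          - (?G m * b ^ m) * (?F m * a ^ m) * (a * b)"
    by (simp only: left_diff_distrib distrib_right)
  also have "\<dots> = a + b - a * b" by (simp only: F G mult_1_left)
  also have "\<dots> = 1 + fps_X\<^sup>2" by (simp add: ab) (simp add: a_def b_def)
  also have "\<dots> = ?rhs * (a * b) ^ Suc m"
    using even_multichoose_fps_times_power[of "Suc m"] by (simp add: ab mult_ac)
  finally have "?lhs * (a * b) ^ Suc m = ?rhs * (a * b) ^ Suc m" .
  moreover have "fps_nth ((a * b) ^ Suc m) 0 = 1"
    by (simp add: fps_nth_power_0 a_def b_def)
  then have "(a * b) ^ Suc m \<noteq> 0" by auto
  ultimately show ?thesis by simp
qed

lemma Dsum_Suc_even:
  "Dsum (Suc m) (2 * l)
     = int (multichoose (Suc m) l) + (if l \<ge> 1 then int (multichoose (Suc m) (l - 1)) else 0)"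
proof -
  let ?c = "\<lambda>i. int (multichoose m i)" and ?C = "\<lambda>i. int (multichoose (Suc m) i)"
  have conv: "fps_nth (alt_multichoose_fps r * multichoose_fps s) k
              = (\<Sum>\<beta>\<le>k. (-1) ^ \<beta> * int (multichoose r \<beta>) * int (multichoose s (k - \<beta>)))" for r s k
    by (simp add: fps_mult_nth alt_multichoose_fps_def multichoose_fps_def atMost_atLeast0 del: multichoose.simps)
  have "Dsum (Suc m) (2 * l)
        = (\<Sum>\<beta>\<le>2 * l. (-1) ^ \<beta> * ?C \<beta> * ?c (2 * l - \<beta>) + (-1) ^ \<beta> * ?c \<beta> * ?C (2 * l - \<beta>)
                          - (-1) ^ \<beta> * ?c \<beta> * ?c (2 * l - \<beta>))"
    unfolding Dsum_def dimC_harmC_Suc card_bimonomials_low_last_degree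
    by (rule sum.cong) (simp_all add: algebra_simps del: multichoose.simps)
  also have "\<dots> = fps_nth (alt_multichoose_fps (Suc m) * multichoose_fps m
                         + alt_multichoose_fps m * multichoose_fps (Suc m)
                         - alt_multichoose_fps m * multichoose_fps m) (2 * l)"
    by (simp only: fps_add_nth fps_sub_nth conv sum.distrib sum_subtractf)
  also have "\<dots> = fps_nth (even_multichoose_fps (Suc m) + fps_X\<^sup>2 * even_multichoose_fps (Suc m)) (2 * l)"
    unfolding alternating_fps_identity by (simp add: algebra_simps)
  also have "\<dots> = ?C l + (if l \<ge> 1 then ?C (l - 1) else 0)"
    by (cases l) (simp_all add: even_multichoose_fps_def fps_X_power_mult_nth del: multichoose.simps)
  finally show ?thesis .
qed

section \<open>The closed form\<close>

lemma sum_pochhammer_div_fact: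
  fixes x :: "'a :: field_char_0"
  shows "(\<Sum>j\<le>k. pochhammer x j / fact j) = pochhammer (x + 1) k / fact k"
proof (induction k)
  case (Suc k)
  have "(\<Sum>j\<le>Suc k. pochhammer x j / fact j)
        = pochhammer (x + 1) k / fact k + x * pochhammer (x + 1) k / fact (Suc k)"
    using Suc by (simp add: pochhammer_rec)
  also have "\<dots> = pochhammer (x + 1) k * (x + 1 + of_nat k) / fact (Suc k)"
    unfolding fact_Suc using of_nat_neq_0[of k, where 'a='a]
    by (simp add: divide_simps del: of_nat_Suc) (simp add: algebra_simps)
  also have "\<dots> = pochhammer (x + 1) (Suc k) / fact (Suc k)"
    by (simp add: pochhammer_Suc)
  finally show ?case .
qed simp

lemma multichoose_eq_pochhammer:
  "(of_nat (multichoose n k) :: 'a :: field_char_0) = pochhammer (of_nat n) k / fact k"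
proof (induction n arbitrary: k)
  case 0
  then show ?case by (cases k) (simp_all add: pochhammer_0_left)
next
  case (Suc n)
  then show ?case by (simp add: sum_pochhammer_div_fact add.commute)
qed

text \<open>At l = 0 the factor real l absorbs the truncated subtraction l - 1.\<close>
definition harm_dim :: "nat \<Rightarrow> real \<Rightarrow> real" where
  "harm_dim l x = (pochhammer x l + real l * pochhammer x (l - 1)) / fact l"

lemma harm_dim_Suc:
  "harm_dim (Suc k) x = pochhammer x k * (x - 1 + 2 * real (Suc k)) / fact (Suc k)"
  by (simp add: harm_dim_def pochhammer_Suc algebra_simps)

lemma dimR_harmR_Suc_eq_harm_dim: "real (dimR (harmR (Suc n) l)) = harm_dim l (real n)"
  unfolding dimR_harmR_Suc card_monomials_low_last_degree
  by (cases l) (simp_all add: multichoose_eq_pochhammer harm_dim_def add_divide_distrib del: multichoose.simps)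

lemma closed_form_eq_harm_dim:
  assumes "pochhammer ((x - 1) / 2) l \<noteq> 0"
  shows "closed_form l x = harm_dim l x"
proof (cases l)
  case 0
  then show ?thesis by (simp add: closed_form_def harm_dim_def)
next
  case (Suc k)
  define a where "a = (x - 1) / 2"
  have "pochhammer a l \<noteq> 0" "a \<noteq> 0"
    using assms Suc by (auto simp: a_def pochhammer_rec)
  have "a * pochhammer (a + 1) l = pochhammer a l * (a + real l)"
    by (metis pochhammer_rec pochhammer_Suc)
  then have ratio: "pochhammer (a + 1) l / pochhammer a l = (a + real l) / a"
    using \<open>pochhammer a l \<noteq> 0\<close> \<open>a \<noteq> 0\<close> by (simp add: field_simps)
  have half_succ: "(x + 1) / 2 = a + 1" and x_pred: "x - 1 = 2 * a" by (simp_all add: a_def field_simps)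
  have "closed_form l x = pochhammer (x - 1) l / fact l * (pochhammer (a + 1) l / pochhammer a l)"
    unfolding closed_form_def a_def[symmetric] half_succ by simp
  also have "\<dots> = pochhammer (x - 1) l / fact l * ((a + real l) / a)"
    unfolding ratio ..
  also have "\<dots> = 2 * a * pochhammer x k / fact l * ((a + real l) / a)"
    by (simp add: Suc pochhammer_rec x_pred[symmetric])
  also have "\<dots> = pochhammer x k * (x - 1 + 2 * real l) / fact l"
    unfolding x_pred using \<open>a \<noteq> 0\<close> by (simp add: field_simps)
  finally show ?thesis by (simp add: Suc harm_dim_Suc)
qed

lemma pochhammer_half_pred_nonzero:
  fixes x :: real
  assumes "x > 1/2" "x \<noteq> 1"
  shows "pochhammer ((x - 1) / 2) l \<noteq> 0"
proof
  assume "pochhammer ((x - 1) / 2) l = 0"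
  then obtain k where "(x - 1) / 2 = - real k" by (auto simp: pochhammer_eq_0_iff)
  with assms show False by (cases k) auto
qed

lemma tendsto_closed_form:
  assumes "n \<ge> 1"
  shows "(closed_form l \<longlongrightarrow> harm_dim l (real n)) (at (real n))"
proof (rule Lim_transform_eventually)
  show "(harm_dim l \<longlongrightarrow> harm_dim l (real n)) (at (real n))"
    unfolding harm_dim_def pochhammer_prod by (intro tendsto_intros) auto
  have "\<forall>\<^sub>F x in at (real n). x \<in> {real n - 1/2<..} - {real n}"
    by (rule eventually_at_in_open) auto
  then show "\<forall>\<^sub>F x in at (real n). harm_dim l x = closed_form l x"
  proof eventually_elim
    case (elim x)
    with assms have "x > 1/2" "x \<noteq> 1" by (cases "n = 1"; auto)+
    then show ?case by (simp add: closed_form_eq_harm_dim pochhammer_half_pred_nonzero)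
  qed
qed

theorem proposition3p2:
  fixes n l :: nat
  assumes "n \<ge> 1"
  shows "Dsum n (2 * l) = int (dimR (harmR (n + 1) l))
     \<and> (closed_form l \<longlongrightarrow> real (dimR (harmR (n + 1) l))) (at (real n))
     \<and> (n \<ge> 2 \<longrightarrow> real (dimR (harmR (n + 1) l)) = closed_form l (real n))"
proof (intro conjI impI)
  obtain m where n: "n = Suc m" using assms by (cases n) auto
  show "Dsum n (2 * l) = int (dimR (harmR (n + 1) l))"
    unfolding n Suc_eq_plus1[symmetric] Dsum_Suc_even dimR_harmR_Suc card_monomials_low_last_degree
    by simp
  have dim: "real (dimR (harmR (n + 1) l)) = harm_dim l (real n)"
    using dimR_harmR_Suc_eq_harm_dim[of n l] by simp
  show "(closed_form l \<longlongrightarrow> real (dimR (harmR (n + 1) l))) (at (real n))"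
    unfolding dim using assms by (rule tendsto_closed_form)
  show "real (dimR (harmR (n + 1) l)) = closed_form l (real n)" if "n \<ge> 2"
    unfolding dim using that by (simp add: closed_form_eq_harm_dim pochhammer_half_pred_nonzero)
qed

end
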